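(* Let $r\ge 1$ and let $\tau$ be a permutation of $F^r$ with $\tau(\mathbf 0)=\mathbf 0$ such that $SQS_\tau$ is not affine. Then: (1) for any distinct $a,b\in F^r$, the symmetric difference of any two distinct quadruples of $Q_0(a,b)$ belongs to $SQS_\tau$, and the symmetric difference of any two distinct quadruples of $Q_1(a,b)$ belongs to $SQS_\tau$; (2) for any $a,b\in F^r$ there are two distinct quadruples in $Q_\tau(a,b)$ whose symmetric difference does not belong to $SQS_\tau$.
   Context: $F=\mathrm{GF}(2)$, $\mathbf 0$ is the all-zero vector. The point set consists of the $2^{r+1}$ symbols $(\{a\},\emptyset)$ and $(\emptyset,\{a\})$, $a\in F^r$; a pair $(X,Y)$ with $X,Y\subseteq F^r$ denotes the set of points $\{(\{x\},\emptyset):x\in X\}\cup\{(\emptyset,\{y\}):y\in Y\}$, and symmetric differences are taken as sets of points. $SQS_\tau=Q_0\cup Q_1\cup Q_\tau$ where $Q_0=\{(\{a,b,c,d\},\emptyset): a,b,c,d\in F^r \text{ pairwise distinct}, a+b+c+d=\mathbf 0\}$, $Q_1=\{(\emptyset,\{a,b,c,d\}): a,b,c,d\in F^r \text{ pairwise distinct}, a+b+c+d=\mathbf 0\}$, $Q_\tau=\{(\{a,c\},\{b,d\}): a,b,c,d\in F^r, \tau(a+c)=b+d\neq\mathbf 0\}$. (It is a Steiner quadruple system: the set of supports of weight-4 codewords of the code $S_\tau$ below.) For distinct $a,b\in F^r$: $Q_0(a,b)=\{(\{a,b,c,d\},\emptyset): c\ne d,\ a+b+c+d=\mathbf 0\}\cup\{(\{a,b\},\{c,d\}):\tau(a+b)=c+d\neq\mathbf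 0\}$, $Q_1(a,b)=\{(\emptyset,\{a,b,c,d\}): c\ne d,\ a+b+c+d=\mathbf 0\}\cup\{(\{c,d\},\{a,b\}):\tau(c+d)=a+b\neq\mathbf 0\}$, and for any $a,b\in F^r$: $Q_\tau(a,b)=\{(\{a,c\},\{b,d\}): c,d\in F^r,\ \tau(a+c)=b+d\neq\mathbf 0\}$. These are the quadruples of $SQS_\tau$ containing the two points $(\{a\},\emptyset),(\{b\},\emptyset)$; $(\emptyset,\{a\}),(\emptyset,\{b\})$; $(\{a\},\emptyset),(\emptyset,\{b\})$ respectively. A Steiner quadruple system is affine if it is the Steiner quadruple system formed by the supports of the weight-4 codewords of an extended Hamming code (equivalently, isomorphic to the one of the extended Hamming code of the same length). The code $S_\tau$: index coordinates of $F^{2^r}$ by $F^r$, let $e_a$ be the unit vector at position $a$, $\mathcal H=\{x\in F^{2^r}:\sum_{a:x_a=1}a=\mathbf 0,\ \mathrm{wt}(x)\text{ even}\}$, and $S_\tau=\bigcup_{a\in F^r}(\mathcal H+e_a+e_{\mathbf 0})\times(\mathcal H+e_{\tau(a)}+e_{\tau(\mathbf 0)})\subseteq F^{2^{r+1}}$. *)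

theory Defs
  imports Main
begin

text \<open>Vectors of F^r, F = GF(2), are modelled as functions nat \<Rightarrow> bool that
  vanish outside the coordinates 0..r-1; addition is coordinatewise xor.\<close>

type_synonym vec = "nat \<Rightarrow> bool"

definition Vr :: "nat \<Rightarrow> vec set" where
  "Vr r = {x. \<forall>i. r \<le> i \<longrightarrow> \<not> x i}"

definition vzero :: vec where
  "vzero = (\<lambda>_. False)"

definition vadd :: "vec \<Rightarrow> vec \<Rightarrow> vec" (infixl "\<oplus>" 65) where
  "x \<oplus> y = (\<lambda>i. x i \<noteq> y i)"

text \<open>Points: Inl a stands for ({a},{}), Inr a stands for ({},{a}).\<close>

type_synonym point = "vec + vec"

definition pts :: "nat \<Rightarrow> point set" where
  "pts r = Inl ` Vr r \<union> Inr ` Vr r"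

definition symdiff :: "'a set \<Rightarrow> 'a set \<Rightarrow> 'a set" where
  "symdiff A B = (A - B) \<union> (B - A)"

definition distinct4 :: "'a \<Rightarrow> 'a \<Rightarrow> 'a \<Rightarrow> 'a \<Rightarrow> bool" where
  "distinct4 a b c d \<longleftrightarrow> a \<noteq> b \<and> a \<noteq> c \<and> a \<noteq> d \<and> b \<noteq> c \<and> b \<noteq> d \<and> c \<noteq> d"

definition Q0 :: "nat \<Rightarrow> point set set" where
  "Q0 r = {Inl ` {a,b,c,d} | a b c d. a \<in> Vr r \<and> b \<in> Vr r \<and> c \<in> Vr r \<and> d \<in> Vr r
       \<and> distinct4 a b c d \<and> a \<oplus> b \<oplus> c \<oplus> d = vzero}"

definition Q1 :: "nat \<Rightarrow> point set set" where
  "Q1 r = {Inr ` {a,b,c,d} | a b c d. a \<in> Vr r \<and> b \<in> Vr r \<and> c \<in> Vr r \<and> d \<in> Vr r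
       \<and> distinct4 a b c d \<and> a \<oplus> b \<oplus> c \<oplus> d = vzero}"

definition Qtau :: "nat \<Rightarrow> (vec \<Rightarrow> vec) \<Rightarrow> point set set" where
  "Qtau r \<tau> = {Inl ` {a,c} \<union> Inr ` {b,d} | a b c d. a \<in> Vr r \<and> b \<in> Vr r \<and> c \<in> Vr r \<and> d \<in> Vr r
       \<and> \<tau> (a \<oplus> c) = b \<oplus> d \<and> b \<oplus> d \<noteq> vzero}"

definition SQS :: "nat \<Rightarrow> (vec \<Rightarrow> vec) \<Rightarrow> point set set" where
  "SQS r \<tau> = Q0 r \<union> Q1 r \<union> Qtau r \<tau>"

text \<open>Quadruples of SQS_tau through two given points (a,b distinct for Q0ab/Q1ab).\<close>

definition Q0ab :: "nat \<Rightarrow> (vec \<Rightarrow> vec) \<Rightarrow> vec \<Rightarrow> vec \<Rightarrow> point set set" where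
  "Q0ab r \<tau> a b =
     {Inl ` {a,b,c,d} | c d. c \<in> Vr r \<and> d \<in> Vr r \<and> distinct4 a b c d \<and> a \<oplus> b \<oplus> c \<oplus> d = vzero}
   \<union> {Inl ` {a,b} \<union> Inr ` {c,d} | c d. c \<in> Vr r \<and> d \<in> Vr r \<and> \<tau> (a \<oplus> b) = c \<oplus> d \<and> c \<oplus> d \<noteq> vzero}"

definition Q1ab :: "nat \<Rightarrow> (vec \<Rightarrow> vec) \<Rightarrow> vec \<Rightarrow> vec \<Rightarrow> point set set" where
  "Q1ab r \<tau> a b =
     {Inr ` {a,b,c,d} | c d. c \<in> Vr r \<and> d \<in> Vr r \<and> distinct4 a b c d \<and> a \<oplus> b \<oplus> c \<oplus> d = vzero}
   \<union> {Inl ` {c,d} \<union> Inr ` {a,b} | c d. c \<in> Vr r \<and> d \<in> Vr r \<and> \<tau> (c \<oplus> d) = a \<oplus> b \<and> a \<oplus> b \<noteq> vzero}"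

definition Qtauab :: "nat \<Rightarrow> (vec \<Rightarrow> vec) \<Rightarrow> vec \<Rightarrow> vec \<Rightarrow> point set set" where
  "Qtauab r \<tau> a b =
     {Inl ` {a,c} \<union> Inr ` {b,d} | c d. c \<in> Vr r \<and> d \<in> Vr r \<and> \<tau> (a \<oplus> c) = b \<oplus> d \<and> b \<oplus> d \<noteq> vzero}"

text \<open>The SQS of the extended Hamming code of length 2^n, coordinates indexed by F^n.\<close>

definition hamming_sqs :: "nat \<Rightarrow> vec set set" where
  "hamming_sqs n = {{a,b,c,d} | a b c d. a \<in> Vr n \<and> b \<in> Vr n \<and> c \<in> Vr n \<and> d \<in> Vr n
       \<and> distinct4 a b c d \<and> a \<oplus> b \<oplus> c \<oplus> d = vzero}"

definition affine_sqs :: "nat \<Rightarrow> point set set \<Rightarrow> bool" where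
  "affine_sqs r S \<longleftrightarrow> (\<exists>\<phi>. bij_betw \<phi> (pts r) (Vr (Suc r)) \<and> (\<lambda>q. \<phi> ` q) ` S = hamming_sqs (Suc r))"

end

(*
  Two quadruples of SQS_\<tau> through the same two points share that pair, so their symmetric
  difference is the union of the two complementary pairs.  Through two points of the same half,
  all complementary pairs on one side have the same sum, and those on the two sides have sums
  matched by \<tau>; hence the union of two of them is again a block of Q_0, Q_1 or Q_\<tau>.  This is (1),
  and it does not use non-affinity.

  The blocks of Q_\<tau>(a,b) are Inl {a, a+x} \<union> Inr {b, b+\<tau> x} for x \<noteq> 0, and the symmetric
  difference of the blocks for x and y is Inl {a+x, a+y} \<union> Inr {b+\<tau> x, b+\<tau> y}, which lies in
  SQS_\<tau> iff \<tau>(x+y) = \<tau> x + \<tau> y.  So if (2) failed, \<tau> would be additive.  But then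
  Inl a \<mapsto> (\<tau> a, 0), Inr b \<mapsto> (b, 1) maps SQS_\<tau> onto the zero-sum quadruples of F^(r+1),
  i.e. onto the Steiner quadruple system of the extended Hamming code, so SQS_\<tau> would be affine.
*)
theory Submission
  imports Defs
begin

section \<open>The vector space F^r\<close>

lemma vadd_commute: "x \<oplus> y = y \<oplus> x"
  by (auto simp: vadd_def)

lemma vadd_assoc: "x \<oplus> y \<oplus> z = x \<oplus> (y \<oplus> z)"
  by (auto simp: vadd_def)

lemma vadd_left_commute: "x \<oplus> (y \<oplus> z) = y \<oplus> (x \<oplus> z)"
  by (auto simp: vadd_def)

lemmas vadd_ac = vadd_assoc vadd_commute vadd_left_commute

lemma vadd_vzero [simp]: "x \<oplus> vzero = x" "vzero \<oplus> x = x"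
  by (simp_all add: vadd_def vzero_def)

lemma vadd_self [simp]: "x \<oplus> x = vzero"
  by (simp add: vadd_def vzero_def)

lemma vadd_cancel_left [simp]: "x \<oplus> (x \<oplus> y) = y"
  by (auto simp: vadd_def)

lemma vadd_left_cancel_iff [simp]: "x \<oplus> y = x \<oplus> z \<longleftrightarrow> y = z"
  by (metis vadd_cancel_left)

lemma vadd_eq_left_iff [simp]: "x \<oplus> y = x \<longleftrightarrow> y = vzero"
  by (metis vadd_left_cancel_iff vadd_vzero(1))

lemma vadd_eq_vzero_iff: "x \<oplus> y = vzero \<longleftrightarrow> x = y"
  by (metis vadd_self vadd_left_cancel_iff)

lemma vadd4_eq_vzero_iff: "a \<oplus> b \<oplus> c \<oplus> d = vzero \<longleftrightarrow> a \<oplus> b = c \<oplus> d"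
  by (metis vadd_eq_vzero_iff vadd_assoc)

lemma vadd_in_Vr: "x \<in> Vr r \<Longrightarrow> y \<in> Vr r \<Longrightarrow> x \<oplus> y \<in> Vr r"
  by (simp add: Vr_def vadd_def)

lemma vzero_in_Vr: "vzero \<in> Vr r"
  by (simp add: Vr_def vzero_def)

lemma vadd_eq_if_doubleton_eq: "{x, y} = {x', y'} \<Longrightarrow> x \<oplus> y = x' \<oplus> y'"
  by (metis doubleton_eq_iff vadd_commute)

lemma doubletons_disjoint_if_vadd_eq:
  assumes "c \<oplus> d = c' \<oplus> d'" and "{c, d} \<noteq> {c', d'}"
  shows "{c, d} \<inter> {c', d'} = {}"
  using assms by (auto, (metis vadd_commute vadd_left_cancel_iff)+)

lemma distinct4_iff_card: "distinct4 a b c d \<longleftrightarrow> card {a, b, c, d} = 4"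
  by (auto simp: distinct4_def card_insert_if)

section \<open>Quadruples made of two pairs\<close>

lemma symdiff_Un_Un:
  "A \<inter> B = {} \<Longrightarrow> A \<inter> C = {} \<Longrightarrow> B \<inter> C = {} \<Longrightarrow> symdiff (A \<union> B) (A \<union> C) = B \<union> C"
  by (auto simp: symdiff_def)

lemma Inl_vimage_Un_Inr: "Inl -` (Inl ` A \<union> Inr ` B) = A"
  by auto

lemma Inr_vimage_Un_Inl: "Inr -` (Inl ` A \<union> Inr ` B) = B"
  by auto

lemma Inl_image_Un_Inr_image_eq_iff:
  "Inl ` A \<union> Inr ` B = Inl ` A' \<union> Inr ` B' \<longleftrightarrow> A = A' \<and> B = B'"
  by (metis Inl_vimage_Un_Inr Inr_vimage_Un_Inl)

lemma doubletons_form_quadruple: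
  assumes "c \<noteq> d" and "c \<oplus> d = c' \<oplus> d'" and "{c, d} \<inter> {c', d'} = {}"
  shows "distinct4 c d c' d'" and "c \<oplus> d \<oplus> c' \<oplus> d' = vzero"
proof -
  from assms(1,2) have "c' \<noteq> d'"
    by (metis vadd_eq_vzero_iff)
  with assms show "distinct4 c d c' d'" "c \<oplus> d \<oplus> c' \<oplus> d' = vzero"
    by (auto simp: distinct4_def vadd4_eq_vzero_iff)
qed

lemma Inl_doubletons_in_SQS:
  assumes "c \<in> Vr r" "d \<in> Vr r" "c' \<in> Vr r" "d' \<in> Vr r"
    and "c \<noteq> d" and "c \<oplus> d = c' \<oplus> d'" and "{c, d} \<inter> {c', d'} = {}"
  shows "Inl ` {c, d} \<union> Inl ` {c', d'} \<in> SQS r \<tau>"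
proof -
  have "Inl ` {c, d} \<union> Inl ` {c', d'} = Inl ` {c, d, c', d'}"
    by auto
  with assms doubletons_form_quadruple[OF assms(5-7)] show ?thesis
    unfolding SQS_def Q0_def by blast
qed

lemma Inr_doubletons_in_SQS:
  assumes "c \<in> Vr r" "d \<in> Vr r" "c' \<in> Vr r" "d' \<in> Vr r"
    and "c \<noteq> d" and "c \<oplus> d = c' \<oplus> d'" and "{c, d} \<inter> {c', d'} = {}"
  shows "Inr ` {c, d} \<union> Inr ` {c', d'} \<in> SQS r \<tau>"
proof -
  have "Inr ` {c, d} \<union> Inr ` {c', d'} = Inr ` {c, d, c', d'}"
    by auto
  with assms doubletons_form_quadruple[OF assms(5-7)] show ?thesis
    unfolding SQS_def Q1_def by blast
qed

lemma Inl_Un_Inr_in_SQS_iff: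
  "Inl ` {a, c} \<union> Inr ` {b, d} \<in> SQS r \<tau> \<longleftrightarrow>
     a \<in> Vr r \<and> c \<in> Vr r \<and> b \<in> Vr r \<and> d \<in> Vr r \<and> \<tau> (a \<oplus> c) = b \<oplus> d \<and> b \<oplus> d \<noteq> vzero"
    (is "?q \<in> _ \<longleftrightarrow> ?P")
proof
  assume "?q \<in> SQS r \<tau>"
  moreover have "?q \<notin> Q0 r" "?q \<notin> Q1 r"
    by (auto simp: Q0_def Q1_def)
  ultimately have "?q \<in> Qtau r \<tau>"
    by (simp add: SQS_def)
  then obtain a' b' c' d' where q: "?q = Inl ` {a', c'} \<union> Inr ` {b', d'}"
    and in_Vr: "a' \<in> Vr r" "b' \<in> Vr r" "c' \<in> Vr r" "d' \<in> Vr r"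
    and sums: "\<tau> (a' \<oplus> c') = b' \<oplus> d'" "b' \<oplus> d' \<noteq> vzero"
    unfolding Qtau_def by blast
  from q have pairs: "{a, c} = {a', c'}" "{b, d} = {b', d'}"
    by (simp_all only: Inl_image_Un_Inr_image_eq_iff)
  have "{a, c} \<subseteq> Vr r" "{b, d} \<subseteq> Vr r"
    using in_Vr by (simp_all add: pairs)
  with sums pairs[THEN vadd_eq_if_doubleton_eq]
  show ?P
    by simp
next
  assume ?P
  then show "?q \<in> SQS r \<tau>"
    unfolding SQS_def Qtau_def by blast
qed

section \<open>Quadruples through two points of the same half\<close>

lemma Q0ab_cases:
  assumes "q \<in> Q0ab r \<tau> a b"
  obtains (Q0) c d where "q = Inl ` {a, b} \<union> Inl ` {c, d}" "c \<in> Vr r" "d \<in> Vr r"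
      "c \<noteq> d" "c \<oplus> d = a \<oplus> b" "{a, b} \<inter> {c, d} = {}"
  | (Qtau) c d where "q = Inl ` {a, b} \<union> Inr ` {c, d}" "c \<in> Vr r" "d \<in> Vr r"
      "c \<oplus> d = \<tau> (a \<oplus> b)" "c \<oplus> d \<noteq> vzero"
  using assms unfolding Q0ab_def
proof (elim UnE CollectE exE conjE)
  fix c d
  assume q: "q = Inl ` {a, b, c, d}" and "c \<in> Vr r" "d \<in> Vr r"
    and dist: "distinct4 a b c d" and "a \<oplus> b \<oplus> c \<oplus> d = vzero"
  moreover from q have "q = Inl ` {a, b} \<union> Inl ` {c, d}"
    by auto
  moreover from dist have "c \<noteq> d" "{a, b} \<inter> {c, d} = {}"
    by (auto simp: distinct4_def)
  ultimately show thesis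
    by (intro Q0[of c d]) (simp_all add: vadd4_eq_vzero_iff)
next
  fix c d
  assume "q = Inl ` {a, b} \<union> Inr ` {c, d}" "c \<in> Vr r" "d \<in> Vr r" "\<tau> (a \<oplus> b) = c \<oplus> d" "c \<oplus> d \<noteq> vzero"
  then show thesis
    by (intro Qtau[of c d]) auto
qed

lemma Q1ab_cases:
  assumes "q \<in> Q1ab r \<tau> a b"
  obtains (Q1) c d where "q = Inr ` {a, b} \<union> Inr ` {c, d}" "c \<in> Vr r" "d \<in> Vr r"
      "c \<noteq> d" "c \<oplus> d = a \<oplus> b" "{a, b} \<inter> {c, d} = {}"
  | (Qtau) c d where "q = Inr ` {a, b} \<union> Inl ` {c, d}" "c \<in> Vr r" "d \<in> Vr r"
      "\<tau> (c \<oplus> d) = a \<oplus> b" "a \<oplus> b \<noteq> vzero"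
  using assms unfolding Q1ab_def
proof (elim UnE CollectE exE conjE)
  fix c d
  assume q: "q = Inr ` {a, b, c, d}" and "c \<in> Vr r" "d \<in> Vr r"
    and dist: "distinct4 a b c d" and "a \<oplus> b \<oplus> c \<oplus> d = vzero"
  moreover from q have "q = Inr ` {a, b} \<union> Inr ` {c, d}"
    by auto
  moreover from dist have "c \<noteq> d" "{a, b} \<inter> {c, d} = {}"
    by (auto simp: distinct4_def)
  ultimately show thesis
    by (intro Q1[of c d]) (simp_all add: vadd4_eq_vzero_iff)
next
  fix c d
  assume "q = Inl ` {c, d} \<union> Inr ` {a, b}" "c \<in> Vr r" "d \<in> Vr r" "\<tau> (c \<oplus> d) = a \<oplus> b" "a \<oplus> b \<noteq> vzero"
  then show thesis
    by (intro Qtau[of c d]) auto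
qed

lemma Q0ab_symdiff_in_SQS:
  assumes "q1 \<in> Q0ab r \<tau> a b" and "q2 \<in> Q0ab r \<tau> a b" and "q1 \<noteq> q2"
  shows "symdiff q1 q2 \<in> SQS r \<tau>"
  using assms(1)
proof (cases rule: Q0ab_cases)
  case (Q0 c d)
  note q1 = this
  from assms(2) show ?thesis
  proof (cases rule: Q0ab_cases)
    case (Q0 c' d')
    with q1 \<open>q1 \<noteq> q2\<close> have disj: "{c, d} \<inter> {c', d'} = {}"
      by (metis doubletons_disjoint_if_vadd_eq)
    with q1 Q0 have "symdiff q1 q2 = Inl ` {c, d} \<union> Inl ` {c', d'}"
      unfolding q1(1) Q0(1) by (intro symdiff_Un_Un) auto
    also have "\<dots> \<in> SQS r \<tau>"
      using q1 Q0 disj by (intro Inl_doubletons_in_SQS) simp_all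
    finally show ?thesis .
  next
    case (Qtau c' d')
    with q1 have "symdiff q1 q2 = Inl ` {c, d} \<union> Inr ` {c', d'}"
      unfolding q1(1) Qtau(1) by (intro symdiff_Un_Un) auto
    also have "\<dots> \<in> SQS r \<tau>"
      using q1 Qtau unfolding Inl_Un_Inr_in_SQS_iff by simp
    finally show ?thesis .
  qed
next
  case (Qtau c d)
  note q1 = this
  from assms(2) show ?thesis
  proof (cases rule: Q0ab_cases)
    case (Q0 c' d')
    with q1 have "symdiff q1 q2 = Inl ` {c', d'} \<union> Inr ` {c, d}"
      unfolding q1(1) Q0(1) by (subst Un_commute, intro symdiff_Un_Un) auto
    also have "\<dots> \<in> SQS r \<tau>"
      using q1 Q0 unfolding Inl_Un_Inr_in_SQS_iff by simp
    finally show ?thesis .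
  next
    case (Qtau c' d')
    from q1(5) have "c \<noteq> d"
      by (simp add: vadd_eq_vzero_iff)
    from q1 Qtau \<open>q1 \<noteq> q2\<close> have disj: "{c, d} \<inter> {c', d'} = {}"
      by (metis doubletons_disjoint_if_vadd_eq)
    with q1 Qtau have "symdiff q1 q2 = Inr ` {c, d} \<union> Inr ` {c', d'}"
      unfolding q1(1) Qtau(1) by (intro symdiff_Un_Un) auto
    also have "\<dots> \<in> SQS r \<tau>"
      using q1 Qtau disj \<open>c \<noteq> d\<close> by (intro Inr_doubletons_in_SQS) simp_all
    finally show ?thesis .
  qed
qed

lemma Q1ab_symdiff_in_SQS:
  assumes "inj_on \<tau> (Vr r)" and "\<tau> vzero = vzero"
    and "q1 \<in> Q1ab r \<tau> a b" and "q2 \<in> Q1ab r \<tau> a b" and "q1 \<noteq> q2"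
  shows "symdiff q1 q2 \<in> SQS r \<tau>"
  using assms(3)
proof (cases rule: Q1ab_cases)
  case (Q1 c d)
  note q1 = this
  from assms(4) show ?thesis
  proof (cases rule: Q1ab_cases)
    case (Q1 c' d')
    with q1 \<open>q1 \<noteq> q2\<close> have disj: "{c, d} \<inter> {c', d'} = {}"
      by (metis doubletons_disjoint_if_vadd_eq)
    with q1 Q1 have "symdiff q1 q2 = Inr ` {c, d} \<union> Inr ` {c', d'}"
      unfolding q1(1) Q1(1) by (intro symdiff_Un_Un) auto
    also have "\<dots> \<in> SQS r \<tau>"
      using q1 Q1 disj by (intro Inr_doubletons_in_SQS) simp_all
    finally show ?thesis .
  next
    case (Qtau c' d')
    with q1 have "symdiff q1 q2 = Inl ` {c', d'} \<union> Inr ` {c, d}"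
      unfolding q1(1) Qtau(1) by (subst Un_commute, intro symdiff_Un_Un) auto
    also have "\<dots> \<in> SQS r \<tau>"
      using q1 Qtau unfolding Inl_Un_Inr_in_SQS_iff by (simp add: vadd_eq_vzero_iff)
    finally show ?thesis .
  qed
next
  case (Qtau c d)
  note q1 = this
  from assms(4) show ?thesis
  proof (cases rule: Q1ab_cases)
    case (Q1 c' d')
    with q1 have "symdiff q1 q2 = Inl ` {c, d} \<union> Inr ` {c', d'}"
      unfolding q1(1) Q1(1) by (intro symdiff_Un_Un) auto
    also have "\<dots> \<in> SQS r \<tau>"
      using q1 Q1 unfolding Inl_Un_Inr_in_SQS_iff by simp
    finally show ?thesis .
  next
    case (Qtau c' d')
    from q1 Qtau assms(1) have sum: "c \<oplus> d = c' \<oplus> d'"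
      by (simp add: inj_on_def vadd_in_Vr)
    from q1 assms(2) have "c \<noteq> d"
      by (metis vadd_self)
    from sum q1 Qtau \<open>q1 \<noteq> q2\<close> have disj: "{c, d} \<inter> {c', d'} = {}"
      by (metis doubletons_disjoint_if_vadd_eq)
    with q1 Qtau have "symdiff q1 q2 = Inl ` {c, d} \<union> Inl ` {c', d'}"
      unfolding q1(1) Qtau(1) by (intro symdiff_Un_Un) auto
    also have "\<dots> \<in> SQS r \<tau>"
      using q1 Qtau sum disj \<open>c \<noteq> d\<close> by (intro Inl_doubletons_in_SQS) simp_all
    finally show ?thesis .
  qed
qed

section \<open>Quadruples through a point of each half\<close>

definition additive_on :: "vec set \<Rightarrow> (vec \<Rightarrow> vec) \<Rightarrow> bool" where
  "additive_on A f \<longleftrightarrow> (\<forall>x\<in>A. \<forall>y\<in>A. f (x \<oplus> y) = f x \<oplus> f y)"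

lemma additive_on_if_Qtauab_symdiff_closed:
  assumes bij: "bij_betw \<tau> (Vr r) (Vr r)" and "\<tau> vzero = vzero" and "a \<in> Vr r" "b \<in> Vr r"
    and closed: "\<And>q1 q2. q1 \<in> Qtauab r \<tau> a b \<Longrightarrow> q2 \<in> Qtauab r \<tau> a b \<Longrightarrow> q1 \<noteq> q2 \<Longrightarrow>
      symdiff q1 q2 \<in> SQS r \<tau>"
  shows "additive_on (Vr r) \<tau>"
proof -
  from bij have inj: "inj_on \<tau> (Vr r)" and \<tau>_Vr: "\<And>x. x \<in> Vr r \<Longrightarrow> \<tau> x \<in> Vr r"
    by (auto simp: bij_betw_def)
  have \<tau>_nonzero: "\<tau> x \<noteq> vzero" if "x \<in> Vr r" "x \<noteq> vzero" for x
    using inj that \<open>\<tau> vzero = vzero\<close> vzero_in_Vr by (metis inj_on_def)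
  define Q where "Q x = Inl ` {a, a \<oplus> x} \<union> Inr ` {b, b \<oplus> \<tau> x}" for x
  have Q_in_Qtauab: "Q x \<in> Qtauab r \<tau> a b" if "x \<in> Vr r" "x \<noteq> vzero" for x
  proof -
    have "\<tau> (a \<oplus> (a \<oplus> x)) = b \<oplus> (b \<oplus> \<tau> x)" "b \<oplus> (b \<oplus> \<tau> x) \<noteq> vzero"
      using \<tau>_nonzero[OF that] by simp_all
    moreover have "a \<oplus> x \<in> Vr r" "b \<oplus> \<tau> x \<in> Vr r"
      using that \<tau>_Vr \<open>a \<in> Vr r\<close> \<open>b \<in> Vr r\<close> by (simp_all add: vadd_in_Vr)
    ultimately show ?thesis
      using \<open>a \<in> Vr r\<close> \<open>b \<in> Vr r\<close> unfolding Qtauab_def Q_def by blast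
  qed
  have "\<tau> (x \<oplus> y) = \<tau> x \<oplus> \<tau> y" if "x \<in> Vr r" "y \<in> Vr r" for x y
  proof (cases "x = vzero \<or> y = vzero \<or> x = y")
    case True
    with \<open>\<tau> vzero = vzero\<close> show ?thesis
      by auto
  next
    case False
    with that inj have "\<tau> x \<noteq> \<tau> y"
      by (auto simp: inj_on_def)
    with False that \<tau>_nonzero
    have symdiff_Q: "symdiff (Q x) (Q y) = Inl ` {a \<oplus> x, a \<oplus> y} \<union> Inr ` {b \<oplus> \<tau> x, b \<oplus> \<tau> y}"
      unfolding Q_def symdiff_def by auto
    from False have "Inl (a \<oplus> x) \<in> Q x - Q y"
      unfolding Q_def by auto
    then have "Q x \<noteq> Q y"
      by blast
    with False that have "symdiff (Q x) (Q y) \<in> SQS r \<tau>"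
      by (intro closed Q_in_Qtauab) auto
    then have "\<tau> ((a \<oplus> x) \<oplus> (a \<oplus> y)) = (b \<oplus> \<tau> x) \<oplus> (b \<oplus> \<tau> y)"
      unfolding symdiff_Q Inl_Un_Inr_in_SQS_iff by blast
    then show ?thesis
      by (simp add: vadd_ac)
  qed
  then show ?thesis
    unfolding additive_on_def by blast
qed

section \<open>Additive \<tau> gives an affine system\<close>

lemma Vr_Suc_eq: "Vr (Suc r) = Vr r \<union> (\<lambda>v. v(r := True)) ` Vr r"
proof
  show "Vr (Suc r) \<subseteq> Vr r \<union> (\<lambda>v. v(r := True)) ` Vr r"
  proof
    fix v assume v: "v \<in> Vr (Suc r)"
    show "v \<in> Vr r \<union> (\<lambda>v. v(r := True)) ` Vr r"
    proof (cases "v r")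
      case True
      with v have "v(r := False) \<in> Vr r" "v = (v(r := False))(r := True)"
        by (auto simp: Vr_def fun_upd_idem)
      then show ?thesis
        by blast
    next
      case False
      with v have "v \<in> Vr r"
        by (auto simp: Vr_def) (metis le_antisym not_less_eq_eq)
      then show ?thesis
        by blast
    qed
  qed
qed (auto simp: Vr_def)

lemma Vr_disjoint_lift: "Vr r \<inter> (\<lambda>v. v(r := True)) ` Vr r = {}"
  by (auto simp: Vr_def)

lemma inj_on_lift: "inj_on (\<lambda>v. v(r := True)) (Vr r)"
proof (rule inj_on_inverseI)
  show "(x(r := True))(r := False) = x" if "x \<in> Vr r" for x
    using that by (simp add: Vr_def fun_upd_idem)
qed

lemma lift_eq_iff: "x \<in> Vr r \<Longrightarrow> y \<in> Vr r \<Longrightarrow> x(r := True) = y(r := True) \<longleftrightarrow> x = y"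
  using inj_on_lift by (rule inj_on_eq_iff)

lemma vadd_lift: "x \<in> Vr r \<Longrightarrow> y \<in> Vr r \<Longrightarrow> x(r := True) \<oplus> y(r := True) = x \<oplus> y"
  by (auto simp: Vr_def vadd_def)

lemma additive_on_vzero:
  assumes "additive_on (Vr r) f"
  shows "f vzero = vzero"
proof -
  from assms have "f (vzero \<oplus> vzero) = f vzero \<oplus> f vzero"
    unfolding additive_on_def using vzero_in_Vr by blast
  then show ?thesis
    by simp
qed

definition hamming_iso :: "nat \<Rightarrow> (vec \<Rightarrow> vec) \<Rightarrow> point \<Rightarrow> vec" where
  "hamming_iso r \<tau> = case_sum \<tau> (\<lambda>b. b(r := True))"

lemma hamming_iso_simps [simp]:
  "hamming_iso r \<tau> (Inl a) = \<tau> a"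
  "hamming_iso r \<tau> (Inr b) = b(r := True)"
  by (simp_all add: hamming_iso_def)

lemma bij_betw_hamming_iso:
  assumes "bij_betw \<tau> (Vr r) (Vr r)"
  shows "bij_betw (hamming_iso r \<tau>) (pts r) (Vr (Suc r))"
proof -
  have "hamming_iso r \<tau> \<circ> Inl = \<tau>" "hamming_iso r \<tau> \<circ> Inr = (\<lambda>v. v(r := True))"
    by (simp_all add: fun_eq_iff)
  moreover have "bij_betw Inl (Vr r) (Inl ` Vr r)" "bij_betw Inr (Vr r) (Inr ` Vr r)"
    by (simp_all add: bij_betw_def)
  moreover have "bij_betw (\<lambda>v. v(r := True)) (Vr r) ((\<lambda>v. v(r := True)) ` Vr r)"
    by (simp add: bij_betw_def inj_on_lift)
  ultimately have "bij_betw (hamming_iso r \<tau>) (Inl ` Vr r) (Vr r)"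
    and "bij_betw (hamming_iso r \<tau>) (Inr ` Vr r) ((\<lambda>v. v(r := True)) ` Vr r)"
    using assms bij_betw_comp_iff by metis+
  then show ?thesis
    unfolding pts_def Vr_Suc_eq using Vr_disjoint_lift by (rule bij_betw_combine)
qed

lemma in_hamming_sqsI:
  assumes "{a, b, c, d} \<subseteq> Vr n" and "distinct4 a b c d" and "a \<oplus> b = c \<oplus> d"
  shows "{a, b, c, d} \<in> hamming_sqs n"
  using assms unfolding hamming_sqs_def vadd4_eq_vzero_iff by blast

lemma Vr_subset_Vr_Suc: "Vr r \<subseteq> Vr (Suc r)"
  by (subst Vr_Suc_eq) blast

lemma lift_in_Vr_Suc: "x \<in> Vr r \<Longrightarrow> x(r := True) \<in> Vr (Suc r)"
  by (subst Vr_Suc_eq) blast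

lemma hamming_iso_image_in_hamming_sqs:
  assumes bij: "bij_betw \<tau> (Vr r) (Vr r)" and add: "additive_on (Vr r) \<tau>" and "q \<in> SQS r \<tau>"
  shows "hamming_iso r \<tau> ` q \<in> hamming_sqs (Suc r)"
proof -
  from bij have inj: "inj_on \<tau> (Vr r)" and \<tau>_Vr: "\<And>x. x \<in> Vr r \<Longrightarrow> \<tau> x \<in> Vr (Suc r)"
    using Vr_subset_Vr_Suc by (auto simp: bij_betw_def)
  have \<tau>_ne_lift: "\<tau> x \<noteq> y(r := True)" "y(r := True) \<noteq> \<tau> x" if "x \<in> Vr r" "y \<in> Vr r" for x y
    using that bij Vr_disjoint_lift by (auto simp: bij_betw_def)
  from \<open>q \<in> SQS r \<tau>\<close> consider (Q0) "q \<in> Q0 r" | (Q1) "q \<in> Q1 r" | (Qtau) "q \<in> Qtau r \<tau>"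
    unfolding SQS_def by blast
  then show ?thesis
  proof cases
    case Q0
    then obtain a b c d where "q = Inl ` {a, b, c, d}"
      and in_Vr: "a \<in> Vr r" "b \<in> Vr r" "c \<in> Vr r" "d \<in> Vr r"
      and "distinct4 a b c d" "a \<oplus> b = c \<oplus> d"
      unfolding Q0_def vadd4_eq_vzero_iff by blast
    moreover from in_Vr add have "\<tau> a \<oplus> \<tau> b = \<tau> (a \<oplus> b)" "\<tau> c \<oplus> \<tau> d = \<tau> (c \<oplus> d)"
      by (simp_all add: additive_on_def)
    ultimately show ?thesis
      using inj \<tau>_Vr by (auto simp: distinct4_def inj_on_eq_iff intro!: in_hamming_sqsI)
  next
    case Q1
    then obtain a b c d where "q = Inr ` {a, b, c, d}" "a \<in> Vr r" "b \<in> Vr r" "c \<in> Vr r" "d \<in> Vr r"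
      and "distinct4 a b c d" "a \<oplus> b = c \<oplus> d"
      unfolding Q1_def vadd4_eq_vzero_iff by blast
    then show ?thesis
      using lift_in_Vr_Suc[of _ r]
      by (auto simp: distinct4_def lift_eq_iff vadd_lift intro!: in_hamming_sqsI)
  next
    case Qtau
    then obtain a b c d where "q = Inl ` {a, c} \<union> Inr ` {b, d}"
      and in_Vr: "a \<in> Vr r" "b \<in> Vr r" "c \<in> Vr r" "d \<in> Vr r"
      and sum: "\<tau> (a \<oplus> c) = b \<oplus> d" and "b \<oplus> d \<noteq> vzero"
      unfolding Qtau_def by blast
    moreover from sum \<open>b \<oplus> d \<noteq> vzero\<close> have "a \<noteq> c" "b \<noteq> d"
      using additive_on_vzero[OF add] by auto
    moreover from in_Vr add sum have "\<tau> a \<oplus> \<tau> c = b(r := True) \<oplus> d(r := True)"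
      by (simp add: additive_on_def vadd_lift)
    ultimately show ?thesis
      using inj \<tau>_Vr \<tau>_ne_lift lift_in_Vr_Suc[of _ r]
      by (auto simp: distinct4_def inj_on_eq_iff lift_eq_iff intro!: in_hamming_sqsI)
  qed
qed

lemma zero_sum_quadruple_pairing:
  assumes "a \<oplus> b = c \<oplus> d"
  obtains x y z w where "{x, y, z, w} = {a, b, c, d}" "x \<oplus> y = z \<oplus> w"
    "x i = y i" "z i = w i" "x i \<longrightarrow> z i"
proof -
  have swap: "a \<oplus> c = b \<oplus> d" "a \<oplus> d = b \<oplus> c"
    using assms by (auto simp: vadd_def fun_eq_iff)
  have bit: "(a i \<noteq> b i) = (c i \<noteq> d i)"
    using fun_cong[OF assms, of i] by (simp add: vadd_def)
  have "\<exists>x y z w. {x, y, z, w} = {a, b, c, d} \<and> x \<oplus> y = z \<oplus> w \<and> x i = y i \<and> z i = w i"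
  proof (cases "a i = b i")
    case True
    with assms bit show ?thesis
      by blast
  next
    case False
    show ?thesis
    proof (cases "a i = c i")
      case True
      with False swap bit show ?thesis
        by (intro exI[of _ a] exI[of _ c] exI[of _ b] exI[of _ d]) (auto simp: insert_commute)
    next
      case False
      with \<open>a i \<noteq> b i\<close> swap bit show ?thesis
        by (intro exI[of _ a] exI[of _ d] exI[of _ b] exI[of _ c]) (auto simp: insert_commute)
    qed
  qed
  then obtain x y z w where "{x, y, z, w} = {a, b, c, d}" "x \<oplus> y = z \<oplus> w" "x i = y i" "z i = w i"
    by blast
  then show thesis
    using that[of x y z w] that[of z w x y] by (metis insert_commute)
qed

lemma hamming_iso_doubleton_preimage:
  assumes "bij_betw \<tau> (Vr r) (Vr r)" and "x \<in> Vr (Suc r)" "y \<in> Vr (Suc r)" and "x r = y r"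
  obtains (Inl) x' y' where "\<not> x r" "x' \<in> Vr r" "y' \<in> Vr r" "x = \<tau> x'" "y = \<tau> y'"
  | (Inr) x' y' where "x r" "x' \<in> Vr r" "y' \<in> Vr r" "x = x'(r := True)" "y = y'(r := True)"
proof (cases "x r")
  case True
  with assms(2-4) obtain x' y' where "x' \<in> Vr r" "y' \<in> Vr r" "x = x'(r := True)" "y = y'(r := True)"
    unfolding Vr_Suc_eq by (auto simp: Vr_def)
  with True show thesis
    by (rule Inr)
next
  case False
  with assms(2-4) have "x \<in> \<tau> ` Vr r" "y \<in> \<tau> ` Vr r"
    using \<open>bij_betw \<tau> (Vr r) (Vr r)\<close> unfolding Vr_Suc_eq bij_betw_def by auto
  with False show thesis
    by (metis Inl imageE)
qed

lemma paired_hamming_quadruple_has_preimage: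
  assumes bij: "bij_betw \<tau> (Vr r) (Vr r)" and add: "additive_on (Vr r) \<tau>"
    and in_Vr: "x \<in> Vr (Suc r)" "y \<in> Vr (Suc r)" "z \<in> Vr (Suc r)" "w \<in> Vr (Suc r)"
    and "distinct4 x y z w" and sum: "x \<oplus> y = z \<oplus> w"
    and bits: "x r = y r" "z r = w r" "x r \<longrightarrow> z r"
  shows "\<exists>q \<in> SQS r \<tau>. hamming_iso r \<tau> ` q = {x, y, z, w}"
proof (cases rule: hamming_iso_doubleton_preimage[OF bij in_Vr(1,2) bits(1), case_names Inl Inr])
  case (Inl x' y')
  note xy = this
  show ?thesis
  proof (cases rule: hamming_iso_doubleton_preimage[OF bij in_Vr(3,4) bits(2), case_names Inl Inr])
    case (Inl z' w')
    with xy add sum have "\<tau> (x' \<oplus> y') = \<tau> (z' \<oplus> w')"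
      by (simp add: additive_on_def)
    with xy Inl bij_betw_imp_inj_on[OF bij] have "x' \<oplus> y' = z' \<oplus> w'"
      by (simp add: inj_on_eq_iff vadd_in_Vr)
    with xy Inl \<open>distinct4 x y z w\<close> have "Inl ` {x', y'} \<union> Inl ` {z', w'} \<in> SQS r \<tau>"
      by (intro Inl_doubletons_in_SQS) (auto simp: distinct4_def)
    with xy Inl show ?thesis
      by (intro bexI[of _ "Inl ` {x', y'} \<union> Inl ` {z', w'}"]) auto
  next
    case (Inr z' w')
    with xy add sum \<open>distinct4 x y z w\<close> have "Inl ` {x', y'} \<union> Inr ` {z', w'} \<in> SQS r \<tau>"
      unfolding Inl_Un_Inr_in_SQS_iff
      by (auto simp: additive_on_def vadd_lift vadd_eq_vzero_iff distinct4_def)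
    with xy Inr show ?thesis
      by (intro bexI[of _ "Inl ` {x', y'} \<union> Inr ` {z', w'}"]) auto
  qed
next
  case (Inr x' y')
  note xy = this
  show ?thesis
  proof (cases rule: hamming_iso_doubleton_preimage[OF bij in_Vr(3,4) bits(2), case_names Inl Inr])
    case (Inl z' w')
    with xy bits(3) show ?thesis
      by simp
  next
    case (Inr z' w')
    with xy sum \<open>distinct4 x y z w\<close> have "Inr ` {x', y'} \<union> Inr ` {z', w'} \<in> SQS r \<tau>"
      by (intro Inr_doubletons_in_SQS) (auto simp: vadd_lift distinct4_def)
    with xy Inr show ?thesis
      by (intro bexI[of _ "Inr ` {x', y'} \<union> Inr ` {z', w'}"]) auto
  qed
qed

lemma hamming_sqs_subset_hamming_iso_image:
  assumes "bij_betw \<tau> (Vr r) (Vr r)" and "additive_on (Vr r) \<tau>"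
    and "Q \<in> hamming_sqs (Suc r)"
  shows "Q \<in> (\<lambda>q. hamming_iso r \<tau> ` q) ` SQS r \<tau>"
proof -
  from assms(3) obtain a b c d where "Q = {a, b, c, d}" and "{a, b, c, d} \<subseteq> Vr (Suc r)"
    and "distinct4 a b c d" and "a \<oplus> b = c \<oplus> d"
    unfolding hamming_sqs_def vadd4_eq_vzero_iff by blast
  moreover obtain x y z w where xyzw: "{x, y, z, w} = {a, b, c, d}" and "x \<oplus> y = z \<oplus> w"
    and "x r = y r" "z r = w r" "x r \<longrightarrow> z r"
    by (rule zero_sum_quadruple_pairing[where i = r, OF \<open>a \<oplus> b = c \<oplus> d\<close>])
  moreover from calculation have "{x, y, z, w} \<subseteq> Vr (Suc r)" "distinct4 x y z w"
    by (simp_all add: distinct4_iff_card)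
  ultimately obtain q where "q \<in> SQS r \<tau>" "hamming_iso r \<tau> ` q = Q"
    using paired_hamming_quadruple_has_preimage[OF assms(1,2)] by (metis insert_subset)
  then show ?thesis
    by (rule rev_image_eqI[OF _ sym])
qed

lemma affine_sqs_if_additive_on:
  assumes "bij_betw \<tau> (Vr r) (Vr r)" and "additive_on (Vr r) \<tau>"
  shows "affine_sqs r (SQS r \<tau>)"
  unfolding affine_sqs_def
proof (intro exI conjI)
  show "bij_betw (hamming_iso r \<tau>) (pts r) (Vr (Suc r))"
    using assms(1) by (rule bij_betw_hamming_iso)
  show "(\<lambda>q. hamming_iso r \<tau> ` q) ` SQS r \<tau> = hamming_sqs (Suc r)"
    using hamming_iso_image_in_hamming_sqs[OF assms] hamming_sqs_subset_hamming_iso_image[OF assms]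
    by blast
qed

theorem lemma1:
  fixes r :: nat and \<tau> :: "vec \<Rightarrow> vec"
  assumes "r \<ge> 1"
    and "bij_betw \<tau> (Vr r) (Vr r)"
    and "\<tau> vzero = vzero"
    and "\<not> affine_sqs r (SQS r \<tau>)"
  shows "(\<forall>a\<in>Vr r. \<forall>b\<in>Vr r. a \<noteq> b \<longrightarrow>
            (\<forall>q1\<in>Q0ab r \<tau> a b. \<forall>q2\<in>Q0ab r \<tau> a b. q1 \<noteq> q2 \<longrightarrow> symdiff q1 q2 \<in> SQS r \<tau>) \<and>
            (\<forall>q1\<in>Q1ab r \<tau> a b. \<forall>q2\<in>Q1ab r \<tau> a b. q1 \<noteq> q2 \<longrightarrow> symdiff q1 q2 \<in> SQS r \<tau>))
       \<and> (\<forall>a\<in>Vr r. \<forall>b\<in>Vr r. \<exists>q1\<in>Qtauab r \<tau> a b. \<exists>q2\<in>Qtauab r \<tau> a b.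
            q1 \<noteq> q2 \<and> symdiff q1 q2 \<notin> SQS r \<tau>)"
proof -
  have Qtauab_not_closed: "\<exists>q1\<in>Qtauab r \<tau> a b. \<exists>q2\<in>Qtauab r \<tau> a b. q1 \<noteq> q2 \<and> symdiff q1 q2 \<notin> SQS r \<tau>"
    if "a \<in> Vr r" "b \<in> Vr r" for a b
  proof (rule ccontr)
    assume "\<not> ?thesis"
    then have "additive_on (Vr r) \<tau>"
      using additive_on_if_Qtauab_symdiff_closed[OF assms(2,3) that] by blast
    with assms(4) show False
      using affine_sqs_if_additive_on[OF assms(2)] by blast
  qed
  show ?thesis
  proof (intro conjI ballI impI)
    fix a b q1 q2
    assume "q1 \<in> Q0ab r \<tau> a b" "q2 \<in> Q0ab r \<tau> a b" "q1 \<noteq> q2"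
    then show "symdiff q1 q2 \<in> SQS r \<tau>"
      by (rule Q0ab_symdiff_in_SQS)
  next
    fix a b q1 q2
    assume "q1 \<in> Q1ab r \<tau> a b" "q2 \<in> Q1ab r \<tau> a b" "q1 \<noteq> q2"
    then show "symdiff q1 q2 \<in> SQS r \<tau>"
      by (rule Q1ab_symdiff_in_SQS[OF bij_betw_imp_inj_on[OF assms(2)] assms(3)])
  next
    fix a b
    assume "a \<in> Vr r" "b \<in> Vr r"
    then show "\<exists>q1\<in>Qtauab r \<tau> a b. \<exists>q2\<in>Qtauab r \<tau> a b. q1 \<noteq> q2 \<and> symdiff q1 q2 \<notin> SQS r \<tau>"
      by (rule Qtauab_not_closed)
  qed
qed

end
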